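(* Let $F:\mathbb{R}^n\to\mathbb{R}^n$ and $\phi:\mathbb{R}^n\to\mathbb{R}$ be smooth, let $p\ge1$, $d>0$, and $\Omega_d=\{x\in\mathbb{R}^n:|x|<d\}$. Let $\delta_0,\delta_1,\dots,\delta_p\ge0$ satisfy $$\mathcal{L}_F^p\phi(z)\le\sum_{i=0}^{p-1}\delta_i\mathcal{L}_F^i\phi(z)+\delta_p\quad\text{for all }z\in\Omega_d.$$ For $\xi_0\in\Omega_d$ let $\xi(t;\xi_0)$ denote the solution of $\dot\xi=F(\xi)$ with $\xi(0)=\xi_0$, and let $\tau_{\xi_0}=\sup\{\tau>0:\xi(t;\xi_0)\in\Omega_d\ \forall t\in[0,\tau)\}$. Let $A$ be the $(p+1)\times(p+1)$ matrix whose rows $1,\dots,p-1$ are $e_2^\top,\dots,e_p^\top$ (i.e. $A_{k,k+1}=1$ for $k=1,\dots,p-1$, other entries of these rows zero), whose $p$-th row is $(\delta_0,\delta_1,\dots,\delta_{p-1},1)$, and whose last row is zero. Let $\psi(y,t)=e^{At}y$ be the solution of $\dot\psi=A\psi$ with initial condition $y$, and $\psi_1(y,t)$ its first component. Define $y(\xi_0)=\big(\phi(\xi_0),\mathcal{L}_F\phi(\xi_0),\dots,\mathcal{L}_F^{p-1}\phi(\xi_0),\delta_p\big)^\top$. Then for all $\xi_0\in\Omega_d$, $$\phi(\xi(t;\xi_0))\le\psi_1(y(\xi_0),t)\quad\text{for all }t\in[0,\tau_{\xi_0}).$$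
   Context: $\mathcal{L}_F\phi$ denotes the Lie derivative of $\phi$ along $F$, $\mathcal{L}_F^k\phi=\mathcal{L}_F(\mathcal{L}_F^{k-1}\phi)$, $\mathcal{L}_F^0\phi=\phi$. $|\cdot|$ is the Euclidean norm. *)

theory Defs
  imports "HOL-Analysis.Analysis"
begin

fun hdir :: "('a::real_normed_vector \<Rightarrow> 'b::real_normed_vector) \<Rightarrow> 'a list \<Rightarrow> 'a \<Rightarrow> 'b" where
  "hdir f [] = f"
| "hdir f (v # vs) = (\<lambda>x. frechet_derivative (hdir f vs) (at x) v)"

(* C^\<infinity> on the whole space: all iterated derivatives exist (and are hence continuous) everywhere *)
definition smooth :: "('a::real_normed_vector \<Rightarrow> 'b::real_normed_vector) \<Rightarrow> bool" where
  "smooth f \<longleftrightarrow> (\<forall>vs x. hdir f vs differentiable (at x))"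

definition lie_deriv :: "('a::real_normed_vector \<Rightarrow> 'a) \<Rightarrow> ('a \<Rightarrow> real) \<Rightarrow> 'a \<Rightarrow> real" where
  "lie_deriv F \<phi> = (\<lambda>x. frechet_derivative \<phi> (at x) (F x))"

definition lie_pow :: "('a::real_normed_vector \<Rightarrow> 'a) \<Rightarrow> nat \<Rightarrow> ('a \<Rightarrow> real) \<Rightarrow> 'a \<Rightarrow> real" where
  "lie_pow F k \<phi> = (lie_deriv F ^^ k) \<phi>"

(* Square matrices of size (p+1) with indices 0..p, vectors indexed 0..p *)
definition mat_vec :: "nat \<Rightarrow> (nat \<Rightarrow> nat \<Rightarrow> real) \<Rightarrow> (nat \<Rightarrow> real) \<Rightarrow> nat \<Rightarrow> real" where
  "mat_vec p M y = (\<lambda>i. if i \<le> p then (\<Sum>j\<le>p. M i j * y j) else 0)"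

definition mat_exp_apply :: "nat \<Rightarrow> (nat \<Rightarrow> nat \<Rightarrow> real) \<Rightarrow> real \<Rightarrow> (nat \<Rightarrow> real) \<Rightarrow> nat \<Rightarrow> real" where
  "mat_exp_apply p M t y = (\<lambda>i. \<Sum>k. t ^ k / fact k * ((mat_vec p M ^^ k) y) i)"

(* The matrix A (0-based indices 0..p): rows 0..p-2 are shift rows e_{i+1}^T,
   row p-1 is (\<delta>_0,...,\<delta>_{p-1},1), row p is zero. *)
definition matA :: "nat \<Rightarrow> (nat \<Rightarrow> real) \<Rightarrow> nat \<Rightarrow> nat \<Rightarrow> real" where
  "matA p \<delta> = (\<lambda>i j.
     if i + 1 < p then (if j = i + 1 then 1 else 0)
     else if i + 1 = p then (if j < p then \<delta> j else if j = p then 1 else 0)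
     else 0)"

definition psi1 :: "nat \<Rightarrow> (nat \<Rightarrow> real) \<Rightarrow> (nat \<Rightarrow> real) \<Rightarrow> real \<Rightarrow> real" where
  "psi1 p \<delta> y t = mat_exp_apply p (matA p \<delta>) t y 0"

definition yvec :: "nat \<Rightarrow> (nat \<Rightarrow> real) \<Rightarrow> ('a::real_normed_vector \<Rightarrow> 'a) \<Rightarrow> ('a \<Rightarrow> real) \<Rightarrow> 'a \<Rightarrow> nat \<Rightarrow> real" where
  "yvec p \<delta> F \<phi> x0 = (\<lambda>i. if i < p then lie_pow F i \<phi> x0 else if i = p then \<delta> p else 0)"

end

theory Submission
  imports Defs
begin

text \<open>Along the trajectory the vector u(s) = (phi, L phi, ..., L^(p-1) phi, delta_p) at xi(s)
  satisfies the componentwise differential inequality u' <= A u, and A has nonnegative entries.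
  For such cooperative systems the weight w(r) = e_0^T exp(r A) is nonnegative with w' = w A,
  so W(s) = w(t - s) u(s) has W'(s) = w(t - s) (u'(s) - A u(s)) <= 0. Hence
  phi(xi(t)) = W(t) <= W(0) = (exp(t A) u(0))_0 = psi_1(y(xi_0), t).\<close>

section \<open>Smoothness of Lie derivatives\<close>

lemma hdir_append: "hdir (hdir f [v]) vs = hdir f (vs @ [v])"
  by (induction vs) auto

lemma smooth_hdir_single: "smooth f \<Longrightarrow> smooth (hdir f [v])"
  unfolding smooth_def by (simp only: hdir_append) blast

lemma smooth_imp_differentiable: "smooth f \<Longrightarrow> f differentiable (at x)"
  unfolding smooth_def by (metis hdir.simps(1))

lemma hdir_inner_left:
  assumes "smooth F"
  shows "hdir (\<lambda>x. F x \<bullet> b) vs = (\<lambda>x. hdir F vs x \<bullet> b)"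
proof (induction vs)
  case Nil
  then show ?case by simp
next
  case (Cons w vs)
  show ?case
  proof
    fix x
    have "hdir F vs differentiable (at x)"
      using assms unfolding smooth_def by blast
    then have "(hdir F vs has_derivative frechet_derivative (hdir F vs) (at x)) (at x)"
      using frechet_derivative_works by blast
    then have "((\<lambda>x. hdir F vs x \<bullet> b) has_derivative
                 (\<lambda>h. frechet_derivative (hdir F vs) (at x) h \<bullet> b)) (at x)"
      by (rule derivative_eq_intros) simp
    then show "hdir (\<lambda>x. F x \<bullet> b) (w # vs) x = hdir F (w # vs) x \<bullet> b"
      using Cons frechet_derivative_at by (metis hdir.simps(2))
  qed
qed

lemma smooth_inner_left:
  assumes "smooth F"
  shows "smooth (\<lambda>x. F x \<bullet> b)"
  unfolding smooth_def hdir_inner_left[OF assms]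
proof (intro allI)
  fix vs x
  have "hdir F vs differentiable (at x)"
    using assms unfolding smooth_def by blast
  then show "(\<lambda>x. hdir F vs x \<bullet> b) differentiable (at x)"
    using differentiable_compose[of "\<lambda>y. y \<bullet> b" "hdir F vs" x]
    by (auto simp: o_def intro: bounded_linear_imp_differentiable bounded_linear_inner_left)
qed

lemma hdir_single_add:
  assumes "f differentiable (at x)" "g differentiable (at x)"
  shows "hdir (\<lambda>x. f x + g x) [w] x = hdir f [w] x + hdir g [w] x"
proof -
  have "((\<lambda>x. f x + g x) has_derivative
          (\<lambda>h. frechet_derivative f (at x) h + frechet_derivative g (at x) h)) (at x)"
    using assms by (intro has_derivative_add) (simp_all add: frechet_derivative_works)
  then have "frechet_derivative (\<lambda>x. f x + g x) (at x)
               = (\<lambda>h. frechet_derivative f (at x) h + frechet_derivative g (at x) h)"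
    by (rule frechet_derivative_at[symmetric])
  then show ?thesis
    by simp
qed

lemma hdir_single_mult:
  fixes f g :: "'a::real_normed_vector \<Rightarrow> real"
  assumes "f differentiable (at x)" "g differentiable (at x)"
  shows "hdir (\<lambda>x. f x * g x) [w] x = f x * hdir g [w] x + hdir f [w] x * g x"
proof -
  have "((\<lambda>x. f x * g x) has_derivative
          (\<lambda>h. f x * frechet_derivative g (at x) h + frechet_derivative f (at x) h * g x)) (at x)"
    using assms by (intro has_derivative_mult) (simp_all add: frechet_derivative_works)
  then have "frechet_derivative (\<lambda>x. f x * g x) (at x)
               = (\<lambda>h. f x * frechet_derivative g (at x) h + frechet_derivative f (at x) h * g x)"
    by (rule frechet_derivative_at[symmetric])
  then show ?thesis
    by simp
qed

text \<open>Smoothness of a product cannot be shown by induction on the derivative order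
  directly, because the derivative of a product is a sum of products; this class is closed
  under directional derivatives.\<close>

inductive sum_of_smooth_products :: "('a::real_normed_vector \<Rightarrow> real) \<Rightarrow> bool" where
  zero: "sum_of_smooth_products (\<lambda>x. 0)"
| mult: "smooth f \<Longrightarrow> smooth g \<Longrightarrow> sum_of_smooth_products (\<lambda>x. f x * g x)"
| add: "sum_of_smooth_products f \<Longrightarrow> sum_of_smooth_products g \<Longrightarrow>
          sum_of_smooth_products (\<lambda>x. f x + g x)"

lemma sum_of_smooth_products_hdir_single:
  "sum_of_smooth_products h \<Longrightarrow>
     (\<forall>x. h differentiable (at x)) \<and> (\<forall>w. sum_of_smooth_products (hdir h [w]))"
proof (induction rule: sum_of_smooth_products.induct)
  case zero
  have "frechet_derivative (\<lambda>x. 0::real) (at x) = (\<lambda>h. 0)" for x :: 'a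
    using frechet_derivative_at[OF has_derivative_const] by metis
  then show ?case
    by (simp add: sum_of_smooth_products.zero)
next
  case (mult f g)
  then have "f differentiable (at x)" "g differentiable (at x)" for x
    by (simp_all add: smooth_imp_differentiable)
  then have "hdir (\<lambda>x. f x * g x) [w] = (\<lambda>x. f x * hdir g [w] x + hdir f [w] x * g x)" for w
    using hdir_single_mult by blast
  moreover have "smooth (hdir f [w])" "smooth (hdir g [w])" for w
    using mult.hyps by (simp_all only: smooth_hdir_single)
  ultimately show ?case
    using \<open>\<And>x. f differentiable (at x)\<close> \<open>\<And>x. g differentiable (at x)\<close>
    by (auto intro!: differentiable_mult sum_of_smooth_products.intros mult.hyps)
next
  case (add f g)
  then have "hdir (\<lambda>x. f x + g x) [w] = (\<lambda>x. hdir f [w] x + hdir g [w] x)" for w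
    using hdir_single_add by blast
  then show ?case
    using add.IH by (auto intro!: differentiable_add sum_of_smooth_products.add)
qed

lemma sum_of_smooth_products_imp_smooth:
  assumes "sum_of_smooth_products h"
  shows "smooth h"
proof -
  have "sum_of_smooth_products (hdir h vs)" for vs
  proof (induction vs)
    case Nil
    then show ?case using assms by simp
  next
    case (Cons w vs)
    then show ?case
      using sum_of_smooth_products_hdir_single[OF Cons] by simp
  qed
  then show ?thesis
    unfolding smooth_def using sum_of_smooth_products_hdir_single by blast
qed

lemma sum_of_smooth_products_sum:
  "finite A \<Longrightarrow> (\<And>a. a \<in> A \<Longrightarrow> sum_of_smooth_products (f a)) \<Longrightarrow>
     sum_of_smooth_products (\<lambda>x. \<Sum>a\<in>A. f a x)"
  by (induction A rule: finite_induct) (auto intro: sum_of_smooth_products.intros)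

lemma lie_deriv_eq_sum_Basis:
  fixes F :: "'a::euclidean_space \<Rightarrow> 'a" and g :: "'a \<Rightarrow> real"
  assumes "smooth g"
  shows "lie_deriv F g = (\<lambda>x. \<Sum>b\<in>Basis. (F x \<bullet> b) * hdir g [b] x)"
proof
  fix x
  have "linear (frechet_derivative g (at x))"
    using assms smooth_imp_differentiable frechet_derivative_works has_derivative_linear by blast
  then have "frechet_derivative g (at x) (\<Sum>b\<in>Basis. (F x \<bullet> b) *\<^sub>R b)
               = (\<Sum>b\<in>Basis. (F x \<bullet> b) * frechet_derivative g (at x) b)"
    by (simp add: linear_sum linear_scale)
  then show "lie_deriv F g x = (\<Sum>b\<in>Basis. (F x \<bullet> b) * hdir g [b] x)"
    unfolding lie_deriv_def by (simp add: euclidean_representation)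
qed

lemma smooth_lie_deriv:
  fixes F :: "'a::euclidean_space \<Rightarrow> 'a" and g :: "'a \<Rightarrow> real"
  assumes "smooth F" "smooth g"
  shows "smooth (lie_deriv F g)"
  unfolding lie_deriv_eq_sum_Basis[OF assms(2)]
  by (intro sum_of_smooth_products_imp_smooth sum_of_smooth_products_sum
        sum_of_smooth_products.mult smooth_inner_left smooth_hdir_single assms) auto

lemma lie_pow_0 [simp]: "lie_pow F 0 g = g"
  by (simp add: lie_pow_def)

lemma lie_pow_Suc: "lie_pow F (Suc k) g = lie_deriv F (lie_pow F k g)"
  by (simp add: lie_pow_def)

lemma smooth_lie_pow:
  fixes F :: "'a::euclidean_space \<Rightarrow> 'a" and g :: "'a \<Rightarrow> real"
  assumes "smooth F" "smooth g"
  shows "smooth (lie_pow F k g)"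
  by (induction k) (simp_all add: lie_pow_Suc smooth_lie_deriv assms)

lemma lie_deriv_along_trajectory:
  assumes "g differentiable (at (\<xi> s))"
    and "(\<xi> has_vector_derivative F (\<xi> s)) (at s within S)"
  shows "((\<lambda>s. g (\<xi> s)) has_real_derivative lie_deriv F g (\<xi> s)) (at s within S)"
proof -
  have "(g has_derivative frechet_derivative g (at (\<xi> s))) (at (\<xi> s) within \<xi> ` S)"
    using assms(1) frechet_derivative_works has_derivative_at_withinI by blast
  from vector_derivative_diff_chain_within[OF assms(2) this] show ?thesis
    by (simp add: lie_deriv_def o_def has_real_derivative_iff_has_vector_derivative)
qed

section \<open>The first row of the exponential of a nonnegative matrix\<close>

definition nonneg_mat :: "nat \<Rightarrow> (nat \<Rightarrow> nat \<Rightarrow> real) \<Rightarrow> bool" where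
  "nonneg_mat p M \<longleftrightarrow> (\<forall>i\<le>p. \<forall>j\<le>p. 0 \<le> M i j)"

fun mat_pow_row0 :: "nat \<Rightarrow> (nat \<Rightarrow> nat \<Rightarrow> real) \<Rightarrow> nat \<Rightarrow> nat \<Rightarrow> real" where
  "mat_pow_row0 p M 0 j = (if j = 0 then 1 else 0)"
| "mat_pow_row0 p M (Suc k) j = (\<Sum>i\<le>p. mat_pow_row0 p M k i * M i j)"

lemma mat_vec_funpow_0: "((mat_vec p M ^^ k) y) 0 = (\<Sum>j\<le>p. mat_pow_row0 p M k j * y j)"
proof (induction k arbitrary: y)
  case 0
  have "(\<Sum>j\<le>p. (if j = 0 then 1 else 0) * y j) = (\<Sum>j\<le>p. if j = 0 then y j else 0)"
    by (rule sum.cong) auto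
  then show ?case by simp
next
  case (Suc k)
  have "((mat_vec p M ^^ Suc k) y) 0 = ((mat_vec p M ^^ k) (mat_vec p M y)) 0"
    by (simp only: funpow_Suc_right comp_apply)
  also have "\<dots> = (\<Sum>j\<le>p. mat_pow_row0 p M k j * (\<Sum>i\<le>p. M j i * y i))"
    unfolding Suc by (rule sum.cong) (auto simp: mat_vec_def)
  also have "\<dots> = (\<Sum>i\<le>p. (\<Sum>j\<le>p. mat_pow_row0 p M k j * M j i) * y i)"
    unfolding sum_distrib_left sum_distrib_right by (subst sum.swap) (simp add: mult_ac)
  finally show ?case by simp
qed

lemma mat_pow_row0_nonneg: "nonneg_mat p M \<Longrightarrow> j \<le> p \<Longrightarrow> 0 \<le> mat_pow_row0 p M k j"
  by (induction k arbitrary: j) (auto simp: nonneg_mat_def intro!: sum_nonneg)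

lemma mat_pow_row0_le:
  assumes "nonneg_mat p M" and K: "\<forall>i\<le>p. \<forall>j\<le>p. M i j \<le> K" and "j \<le> p"
  shows "mat_pow_row0 p M k j \<le> (real (Suc p) * K) ^ k"
proof -
  have "0 \<le> K"
    using assms unfolding nonneg_mat_def by (metis le0 order_trans)
  have "(\<Sum>j\<le>p. mat_pow_row0 p M k j) \<le> (real (Suc p) * K) ^ k"
  proof (induction k)
    case 0
    then show ?case by simp
  next
    case (Suc k)
    have "(\<Sum>j\<le>p. mat_pow_row0 p M (Suc k) j) = (\<Sum>j\<le>p. \<Sum>i\<le>p. mat_pow_row0 p M k i * M i j)"
      by simp
    also have "\<dots> \<le> (\<Sum>j\<le>p. \<Sum>i\<le>p. mat_pow_row0 p M k i * K)"
      using assms by (intro sum_mono mult_left_mono mat_pow_row0_nonneg) auto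
    also have "\<dots> = real (Suc p) * K * (\<Sum>i\<le>p. mat_pow_row0 p M k i)"
      by (simp add: sum_distrib_left mult_ac)
    also have "\<dots> \<le> real (Suc p) * K * (real (Suc p) * K) ^ k"
      using Suc \<open>0 \<le> K\<close> by (intro mult_left_mono) auto
    finally show ?case by simp
  qed
  moreover have "mat_pow_row0 p M k j \<le> (\<Sum>j\<le>p. mat_pow_row0 p M k j)"
    using assms by (intro member_le_sum mat_pow_row0_nonneg) auto
  ultimately show ?thesis by linarith
qed

definition exp_row0 :: "nat \<Rightarrow> (nat \<Rightarrow> nat \<Rightarrow> real) \<Rightarrow> nat \<Rightarrow> real \<Rightarrow> real" where
  "exp_row0 p M j t = (\<Sum>k. mat_pow_row0 p M k j / fact k * t ^ k)"

lemma summable_exp_row0: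
  assumes "nonneg_mat p M" "j \<le> p"
  shows "summable (\<lambda>k. mat_pow_row0 p M k j / fact k * t ^ k)"
proof (rule summable_comparison_test)
  define K where "K = (\<Sum>i\<le>p. \<Sum>j\<le>p. M i j)"
  have K: "\<forall>i\<le>p. \<forall>j\<le>p. M i j \<le> K"
  proof (intro allI impI)
    fix i j assume "i \<le> p" "j \<le> p"
    then have "M i j \<le> (\<Sum>j\<le>p. M i j)" "(\<Sum>j\<le>p. M i j) \<le> K"
      using assms(1) unfolding K_def nonneg_mat_def
      by (auto intro!: member_le_sum sum_nonneg)
    then show "M i j \<le> K" by linarith
  qed
  let ?B = "real (Suc p) * K"
  show "summable (\<lambda>k. inverse (fact k) * (?B * \<bar>t\<bar>) ^ k)"
    by (rule summable_exp)
  have "norm (mat_pow_row0 p M k j / fact k * t ^ k) \<le> inverse (fact k) * (?B * \<bar>t\<bar>) ^ k" for k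
  proof -
    have "norm (mat_pow_row0 p M k j / fact k * t ^ k) = mat_pow_row0 p M k j * \<bar>t\<bar> ^ k / fact k"
      using mat_pow_row0_nonneg[OF assms] by (simp add: abs_mult power_abs)
    also have "\<dots> \<le> ?B ^ k * \<bar>t\<bar> ^ k / fact k"
      using mat_pow_row0_le[OF assms(1) K assms(2)] by (intro divide_right_mono mult_right_mono) auto
    also have "\<dots> = inverse (fact k) * (?B * \<bar>t\<bar>) ^ k"
      by (simp add: power_mult_distrib divide_inverse mult_ac)
    finally show ?thesis .
  qed
  then show "\<exists>N. \<forall>n\<ge>N. norm (mat_pow_row0 p M n j / fact n * t ^ n)
                         \<le> inverse (fact n) * (?B * \<bar>t\<bar>) ^ n"
    by blast
qed

lemma exp_row0_nonneg:
  assumes "nonneg_mat p M" "j \<le> p" "0 \<le> t"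
  shows "0 \<le> exp_row0 p M j t"
  unfolding exp_row0_def using assms mat_pow_row0_nonneg[OF assms(1,2)]
  by (intro suminf_nonneg summable_exp_row0) auto

lemma exp_row0_0: "exp_row0 p M j 0 = (if j = 0 then 1 else 0)"
  unfolding exp_row0_def using powser_zero[of "\<lambda>k. mat_pow_row0 p M k j / fact k"] by simp

lemma mat_exp_apply_0_eq_exp_row0:
  assumes "nonneg_mat p M"
  shows "mat_exp_apply p M t y 0 = (\<Sum>j\<le>p. exp_row0 p M j t * y j)"
proof -
  have "mat_exp_apply p M t y 0 = (\<Sum>k. \<Sum>j\<le>p. mat_pow_row0 p M k j / fact k * t ^ k * y j)"
    unfolding mat_exp_apply_def mat_vec_funpow_0
    by (intro suminf_cong) (simp add: sum_distrib_left mult_ac)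
  also have "\<dots> = (\<Sum>j\<le>p. \<Sum>k. mat_pow_row0 p M k j / fact k * t ^ k * y j)"
    using assms by (intro suminf_sum summable_mult2 summable_exp_row0) auto
  also have "\<dots> = (\<Sum>j\<le>p. exp_row0 p M j t * y j)"
    unfolding exp_row0_def using assms
    by (intro sum.cong refl suminf_mult2[symmetric] summable_exp_row0) auto
  finally show ?thesis .
qed

lemma exp_row0_has_derivative:
  assumes "nonneg_mat p M" "j \<le> p"
  shows "(exp_row0 p M j has_real_derivative (\<Sum>i\<le>p. exp_row0 p M i t * M i j)) (at t)"
proof -
  let ?c = "\<lambda>k. mat_pow_row0 p M k j / fact k"
  have D: "(exp_row0 p M j has_real_derivative (\<Sum>n. diffs ?c n * t ^ n)) (at t)"
    unfolding exp_row0_def[abs_def]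
    by (rule termdiffs_strong_converges_everywhere[OF summable_exp_row0[OF assms]])
  have "diffs ?c n * t ^ n = (\<Sum>i\<le>p. mat_pow_row0 p M n i / fact n * t ^ n * M i j)" for n
  proof -
    have "diffs ?c n = mat_pow_row0 p M (Suc n) j / fact n"
      unfolding diffs_def by (simp only: fact_Suc) (simp del: mat_pow_row0.simps of_nat_Suc)
    then show ?thesis
      by (simp add: sum_divide_distrib sum_distrib_left sum_distrib_right mult_ac)
  qed
  then have "(\<Sum>n. diffs ?c n * t ^ n) = (\<Sum>n. \<Sum>i\<le>p. mat_pow_row0 p M n i / fact n * t ^ n * M i j)"
    by simp
  also have "\<dots> = (\<Sum>i\<le>p. \<Sum>n. mat_pow_row0 p M n i / fact n * t ^ n * M i j)"
    using assms by (intro suminf_sum summable_mult2 summable_exp_row0) auto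
  also have "\<dots> = (\<Sum>i\<le>p. exp_row0 p M i t * M i j)"
    unfolding exp_row0_def using assms
    by (intro sum.cong refl suminf_mult2[symmetric] summable_exp_row0) auto
  finally show ?thesis
    using D by simp
qed

section \<open>Comparison with a cooperative linear system\<close>

lemma comparison_weight_has_derivative:
  assumes "nonneg_mat p M"
    and u: "\<And>j. j \<le> p \<Longrightarrow> (u j has_real_derivative v j) (at s within S)"
  shows "((\<lambda>s. \<Sum>j\<le>p. exp_row0 p M j (t - s) * u j s) has_real_derivative
           (\<Sum>i\<le>p. exp_row0 p M i (t - s) * (v i - (\<Sum>j\<le>p. M i j * u j s)))) (at s within S)"
proof -
  let ?w = "\<lambda>j. \<Sum>i\<le>p. exp_row0 p M i (t - s) * M i j"
  have "((\<lambda>s. exp_row0 p M j (t - s)) has_real_derivative ?w j * -1) (at s within S)"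
    if "j \<le> p" for j
    by (rule DERIV_chain2[OF exp_row0_has_derivative[OF assms(1) that]])
      (auto intro!: derivative_eq_intros)
  then have "((\<lambda>s. \<Sum>j\<le>p. exp_row0 p M j (t - s) * u j s) has_real_derivative
               (\<Sum>j\<le>p. exp_row0 p M j (t - s) * v j + ?w j * -1 * u j s)) (at s within S)"
    by (intro DERIV_sum DERIV_mult' u) auto
  moreover have "(\<Sum>j\<le>p. ?w j * u j s)
                   = (\<Sum>i\<le>p. exp_row0 p M i (t - s) * (\<Sum>j\<le>p. M i j * u j s))"
    unfolding sum_distrib_left sum_distrib_right by (subst sum.swap) (simp add: mult_ac)
  ultimately show ?thesis
    by (simp add: sum.distrib sum_subtractf right_diff_distrib sum_negf)
qed

lemma comparison_cooperative_linear:
  assumes "nonneg_mat p M"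
    and u: "\<And>j s. j \<le> p \<Longrightarrow> s \<in> {0..<T} \<Longrightarrow>
              (u j has_real_derivative v j s) (at s within {0..<T})"
    and v: "\<And>i s. i \<le> p \<Longrightarrow> s \<in> {0..<T} \<Longrightarrow> v i s \<le> (\<Sum>j\<le>p. M i j * u j s)"
    and t: "t \<in> {0..<T}"
  shows "u 0 t \<le> mat_exp_apply p M t (\<lambda>j. u j 0) 0"
proof -
  define W where "W s = (\<Sum>j\<le>p. exp_row0 p M j (t - s) * u j s)" for s
  define W' where "W' s = (\<Sum>i\<le>p. exp_row0 p M i (t - s) * (v i s - (\<Sum>j\<le>p. M i j * u j s)))"
    for s
  have W: "(W has_real_derivative W' s) (at s within {0..<T})" if "s \<in> {0..<T}" for s
    unfolding W_def W'_def using assms(1) u[OF _ that] by (rule comparison_weight_has_derivative)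
  have "W' s \<le> 0" if "0 \<le> s" "s \<le> t" for s
  proof -
    have "s \<in> {0..<T}"
      using that t by simp
    then show ?thesis
      unfolding W'_def using that assms(1) v
      by (intro sum_nonpos mult_nonneg_nonpos exp_row0_nonneg) simp_all
  qed
  moreover have "continuous_on {0..t} W"
  proof -
    have "continuous_on {0..<T} W"
      unfolding continuous_on_eq_continuous_within using W DERIV_continuous by blast
    then show ?thesis
      by (rule continuous_on_subset) (use t in auto)
  qed
  moreover have "(W has_real_derivative W' s) (at s)" if "0 < s" "s < t" for s
  proof -
    have "s \<in> {0..<T}" "s \<in> interior {0..<T}"
      using that t by simp_all
    then show ?thesis
      using W at_within_interior by metis
  qed
  ultimately have "W t \<le> W 0"
    using t by (intro DERIV_nonpos_imp_decreasing_open[of 0 t W]) fastforce+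
  moreover have "W t = u 0 t"
  proof -
    have "W t = (\<Sum>j\<le>p. if j = 0 then u j t else 0)"
      unfolding W_def by (intro sum.cong) (simp_all add: exp_row0_0)
    then show ?thesis
      by simp
  qed
  moreover have "W 0 = mat_exp_apply p M t (\<lambda>j. u j 0) 0"
    by (simp add: W_def mat_exp_apply_0_eq_exp_row0[OF assms(1)])
  ultimately show ?thesis by simp
qed

section \<open>The comparison system for the Lie derivatives of \<phi>\<close>

lemma nonneg_mat_matA: "\<forall>i\<le>p. 0 \<le> \<delta> i \<Longrightarrow> nonneg_mat p (matA p \<delta>)"
  by (simp add: nonneg_mat_def matA_def)

lemma lie_pow_Suc_le_matA_yvec:
  assumes "i \<le> p"
    and "lie_pow F p \<phi> z \<le> (\<Sum>i<p. \<delta> i * lie_pow F i \<phi> z) + \<delta> p"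
  shows "(if i < p then lie_pow F (Suc i) \<phi> z else 0) \<le> (\<Sum>j\<le>p. matA p \<delta> i j * yvec p \<delta> F \<phi> z j)"
proof -
  consider "i + 1 < p" | "i + 1 = p" | "i = p"
    using assms(1) by linarith
  then show ?thesis
  proof cases
    case 1
    then have "(\<Sum>j\<le>p. matA p \<delta> i j * yvec p \<delta> F \<phi> z j)
                 = (\<Sum>j\<le>p. if j = i + 1 then yvec p \<delta> F \<phi> z j else 0)"
      by (intro sum.cong) (auto simp: matA_def)
    with 1 show ?thesis
      by (simp add: yvec_def)
  next
    case 2
    have "(\<Sum>j\<le>p. matA p \<delta> i j * yvec p \<delta> F \<phi> z j)
            = (\<Sum>j\<in>insert p {..<p}. matA p \<delta> i j * yvec p \<delta> F \<phi> z j)"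
      by (intro sum.cong) auto
    also have "\<dots> = \<delta> p + (\<Sum>j<p. \<delta> j * lie_pow F j \<phi> z)"
      using 2 by (subst sum.insert) (auto simp: matA_def yvec_def)
    finally show ?thesis
      using 2 assms(2) by simp
  next
    case 3
    then show ?thesis
      by (simp add: matA_def)
  qed
qed

lemma yvec_along_trajectory_has_derivative:
  fixes F :: "'a::euclidean_space \<Rightarrow> 'a" and \<phi> :: "'a \<Rightarrow> real"
  assumes "smooth F" "smooth \<phi>" "j \<le> p"
    and "(\<xi> has_vector_derivative F (\<xi> s)) (at s within S)"
  shows "((\<lambda>s. yvec p \<delta> F \<phi> (\<xi> s) j) has_real_derivative
           (if j < p then lie_pow F (Suc j) \<phi> (\<xi> s) else 0)) (at s within S)"
proof (cases "j < p")
  case True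
  have "lie_pow F j \<phi> differentiable (at (\<xi> s))"
    using assms(1,2) by (intro smooth_imp_differentiable smooth_lie_pow)
  from lie_deriv_along_trajectory[where \<xi> = \<xi> and F = F, OF this assms(4)] show ?thesis
    using True by (simp add: yvec_def lie_pow_Suc)
next
  case False
  then show ?thesis
    using assms(3) by (simp add: yvec_def)
qed

theorem lemma2:
  fixes F :: "'a::euclidean_space \<Rightarrow> 'a" and \<phi> :: "'a \<Rightarrow> real"
    and p :: nat and d :: real and \<delta> :: "nat \<Rightarrow> real"
  assumes "smooth F" and "smooth \<phi>"
    and "p \<ge> 1" and "d > 0"
    and "\<forall>i\<le>p. \<delta> i \<ge> 0"
    and "\<forall>z\<in>ball 0 d. lie_pow F p \<phi> z \<le> (\<Sum>i<p. \<delta> i * lie_pow F i \<phi> z) + \<delta> p"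
  shows "\<forall>\<xi>0\<in>ball 0 d. \<forall>T>0. \<forall>\<xi> :: real \<Rightarrow> 'a.
           (\<xi> 0 = \<xi>0 \<and> (\<forall>t\<in>{0..<T}. (\<xi> has_vector_derivative F (\<xi> t)) (at t within {0..<T}))
            \<and> (\<forall>t\<in>{0..<T}. \<xi> t \<in> ball 0 d))
           \<longrightarrow> (\<forall>t\<in>{0..<T}. \<phi> (\<xi> t) \<le> psi1 p \<delta> (yvec p \<delta> F \<phi> \<xi>0) t)"
proof (intro ballI allI impI)
  fix \<xi>0 :: 'a and T :: real and \<xi> :: "real \<Rightarrow> 'a" and t :: real
  assume "\<xi> 0 = \<xi>0 \<and> (\<forall>t\<in>{0..<T}. (\<xi> has_vector_derivative F (\<xi> t)) (at t within {0..<T}))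
            \<and> (\<forall>t\<in>{0..<T}. \<xi> t \<in> ball 0 d)"
  then have \<xi>0: "\<xi> 0 = \<xi>0"
    and \<xi>: "\<And>s. s \<in> {0..<T} \<Longrightarrow> (\<xi> has_vector_derivative F (\<xi> s)) (at s within {0..<T})"
    and ball: "\<And>s. s \<in> {0..<T} \<Longrightarrow> \<xi> s \<in> ball 0 d"
    by blast+
  assume t: "t \<in> {0..<T}"
  have "yvec p \<delta> F \<phi> (\<xi> t) 0 \<le> mat_exp_apply p (matA p \<delta>) t (yvec p \<delta> F \<phi> (\<xi> 0)) 0"
  proof (rule comparison_cooperative_linear[where u = "\<lambda>j s. yvec p \<delta> F \<phi> (\<xi> s) j"
        and v = "\<lambda>j s. if j < p then lie_pow F (Suc j) \<phi> (\<xi> s) else 0",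
        OF nonneg_mat_matA[OF assms(5)] _ _ t])
    show "((\<lambda>s. yvec p \<delta> F \<phi> (\<xi> s) j) has_real_derivative
            (if j < p then lie_pow F (Suc j) \<phi> (\<xi> s) else 0)) (at s within {0..<T})"
      if "j \<le> p" "s \<in> {0..<T}" for j s
      using that assms(1,2) \<xi> by (intro yvec_along_trajectory_has_derivative)
    show "(if i < p then lie_pow F (Suc i) \<phi> (\<xi> s) else 0)
            \<le> (\<Sum>j\<le>p. matA p \<delta> i j * yvec p \<delta> F \<phi> (\<xi> s) j)"
      if "i \<le> p" "s \<in> {0..<T}" for i s
      using that assms(6) ball by (intro lie_pow_Suc_le_matA_yvec) auto
  qed
  then show "\<phi> (\<xi> t) \<le> psi1 p \<delta> (yvec p \<delta> F \<phi> \<xi>0) t"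
    using assms(3) by (simp add: yvec_def psi1_def flip: \<xi>0)
qed

end
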